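(* Let $n,m$ be positive integers and let $a^j_i, c^{x,j}_i, c^{y,j}_i, b_j \in \mathbb{R}$ be given for $i\in[n]$, $j\in\{0\}\cup[m]$ (with $b_j$ only for $j\in[m]$). Consider the following two optimization problems in the variables $x,y\in\mathbb{R}^n$, $u\in\mathbb{R}^{2n}$ and $w=(w_{i,k})_{(i,k)\in[2n]\times[2n]}$. McCormick relaxation: $$z_{Mc}:=\min \sum_{i\in[n]} a^0_i w_{i,n+i}+\sum_{i\in[n]}c^{x,0}_i x_i+\sum_{i\in[n]}c^{y,0}_i y_i$$ subject to (C1) $\sum_{i\in[n]} a^j_i w_{i,n+i}+\sum_{i\in[n]}c^{x,j}_i x_i+\sum_{i\in[n]}c^{y,j}_i y_i\ge b_j$ for all $j\in[m]$; (C2) $x_i=u_i$ and $y_i=u_{n+i}$ for all $i\in[n]$; (C3) $u\in[0,1]^{2n}$; (C4) $\max\{0,u_i+u_k-1\}\le w_{i,k}\le \min\{u_i,u_k\}$ for all $(i,k)\in[2n]\times[2n]$. McCormick+SDP relaxation: $$z_{MS}:=\min \sum_{i\in[n]} a^0_i w_{i,n+i}+\sum_{i\in[n]}c^{x,0}_i x_i+\sum_{i\in[n]}c^{y,0}_i y_i$$ subject to (C1)–(C4) and the constraint that the $(2n+1)\times(2n+1)$ matrix $$W:=\begin{bmatrix}1 & u^\top\\ u & w\end{bmatrix}$$ is (symmetric) positive semidefinite. Then either both problems are infeasible, or both are feasible and $z_{Mc}=z_{MS}$.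
   Context: These two problems are relaxations of the quadratically constrained program $\min \sum_i a^0_i x_iy_i+\sum_i c^{x,0}_ix_i+\sum_i c^{y,0}_iy_i$ s.t. $\sum_i a^j_i x_iy_i+\sum_i c^{x,j}_ix_i+\sum_i c^{y,j}_iy_i\ge b_j$ for $j\in[m]$, $x,y\in[0,1]^n$, where $w_{i,k}$ stands for the product $u_iu_k$ with $u=(x,y)$. Here $[n]=\{1,\dots,n\}$. *)

theory Defs
  imports Main "HOL-Analysis.Analysis"
begin

text \<open>Indices: i in [n] = {1..n}; u and w are indexed by [2n] = {1..2n}.
  Coefficients: a j i = a^j_i, cx j i = c^{x,j}_i, cy j i = c^{y,j}_i, b j = b_j.
  A point of the relaxation is (x, y, u, w).\<close>

definition objective ::
  "nat \<Rightarrow> (nat \<Rightarrow> nat \<Rightarrow> real) \<Rightarrow> (nat \<Rightarrow> nat \<Rightarrow> real) \<Rightarrow> (nat \<Rightarrow> nat \<Rightarrow> real)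
   \<Rightarrow> nat \<Rightarrow> (nat \<Rightarrow> real) \<Rightarrow> (nat \<Rightarrow> real) \<Rightarrow> (nat \<Rightarrow> nat \<Rightarrow> real) \<Rightarrow> real" where
  "objective n a cx cy j x y w =
     (\<Sum>i=1..n. a j i * w i (n+i)) + (\<Sum>i=1..n. cx j i * x i) + (\<Sum>i=1..n. cy j i * y i)"

definition mccormick_feasible ::
  "nat \<Rightarrow> nat \<Rightarrow> (nat \<Rightarrow> nat \<Rightarrow> real) \<Rightarrow> (nat \<Rightarrow> nat \<Rightarrow> real) \<Rightarrow> (nat \<Rightarrow> nat \<Rightarrow> real)
   \<Rightarrow> (nat \<Rightarrow> real) \<Rightarrow> (nat \<Rightarrow> real) \<Rightarrow> (nat \<Rightarrow> real) \<Rightarrow> (nat \<Rightarrow> real) \<Rightarrow> (nat \<Rightarrow> nat \<Rightarrow> real) \<Rightarrow> bool" where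
  "mccormick_feasible n m a cx cy b x y u w \<longleftrightarrow>
     (\<forall>j\<in>{1..m}. objective n a cx cy j x y w \<ge> b j) \<and>
     (\<forall>i\<in>{1..n}. x i = u i \<and> y i = u (n+i)) \<and>
     (\<forall>i\<in>{1..2*n}. 0 \<le> u i \<and> u i \<le> 1) \<and>
     (\<forall>i\<in>{1..2*n}. \<forall>k\<in>{1..2*n}.
        max 0 (u i + u k - 1) \<le> w i k \<and> w i k \<le> min (u i) (u k))"

definition Wmat :: "(nat \<Rightarrow> real) \<Rightarrow> (nat \<Rightarrow> nat \<Rightarrow> real) \<Rightarrow> nat \<Rightarrow> nat \<Rightarrow> real" where
  "Wmat u w i k = (if i = 0 \<and> k = 0 then 1 else if i = 0 then u k else if k = 0 then u i else w i k)"

definition sym_psd :: "nat \<Rightarrow> (nat \<Rightarrow> nat \<Rightarrow> real) \<Rightarrow> bool" where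
  "sym_psd N M \<longleftrightarrow>
     (\<forall>i\<in>{0..N}. \<forall>k\<in>{0..N}. M i k = M k i) \<and>
     (\<forall>v::nat \<Rightarrow> real. (\<Sum>i=0..N. \<Sum>k=0..N. v i * M i k * v k) \<ge> 0)"

definition mcsdp_feasible ::
  "nat \<Rightarrow> nat \<Rightarrow> (nat \<Rightarrow> nat \<Rightarrow> real) \<Rightarrow> (nat \<Rightarrow> nat \<Rightarrow> real) \<Rightarrow> (nat \<Rightarrow> nat \<Rightarrow> real)
   \<Rightarrow> (nat \<Rightarrow> real) \<Rightarrow> (nat \<Rightarrow> real) \<Rightarrow> (nat \<Rightarrow> real) \<Rightarrow> (nat \<Rightarrow> real) \<Rightarrow> (nat \<Rightarrow> nat \<Rightarrow> real) \<Rightarrow> bool" where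
  "mcsdp_feasible n m a cx cy b x y u w \<longleftrightarrow>
     mccormick_feasible n m a cx cy b x y u w \<and> sym_psd (2*n) (Wmat u w)"

definition is_min_value :: "('p \<Rightarrow> bool) \<Rightarrow> ('p \<Rightarrow> real) \<Rightarrow> real \<Rightarrow> bool" where
  "is_min_value P f z \<longleftrightarrow> (\<exists>p. P p \<and> f p = z) \<and> (\<forall>p. P p \<longrightarrow> z \<le> f p)"

end

theory Submission
  imports Defs "HOL-Analysis.Analysis"
begin

text \<open>Every point of the McCormick+SDP relaxation is McCormick feasible, so it suffices to turn a
  McCormick feasible point (x, y, u, w) into one with positive semidefinite W and the same objective
  value. The objective reads w only at the pairs (i, n + i), so w may be replaced by u u^T plus, for
  every i, the symmetric 2x2 block on the indices i and n + i with diagonal u_i - u_i^2,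
  u_(n+i) - u_(n+i)^2 and off-diagonal entry w_(i,n+i) - u_i u_(n+i). Then W is (1, u)(1, u)^T plus
  these blocks, and each block is positive semidefinite because the McCormick inequalities force
  (w_(i,n+i) - u_i u_(n+i))^2 \<le> (u_i - u_i^2)(u_(n+i) - u_(n+i)^2). The new entries of w are u_i,
  u_i u_k or the old pair entries, all within the McCormick envelope. The McCormick minimum exists
  by compactness, after the coordinates outside the index ranges, which no constraint involves, are
  set to zero.\<close>

lemma mccormick_product_bounds:
  fixes s t :: real
  assumes "0 \<le> s" "s \<le> 1" "0 \<le> t" "t \<le> 1"
  shows "max 0 (s + t - 1) \<le> s * t \<and> s * t \<le> min s t"
proof -
  have "0 \<le> (1 - s) * (1 - t)" using assms by simp
  then have "s + t - 1 \<le> s * t" by (simp add: algebra_simps)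
  moreover have "s * t \<le> s" "s * t \<le> t" using assms by (simp_all add: mult_left_le mult_left_le_one_le)
  ultimately show ?thesis using assms by simp
qed

lemma mccormick_gap_sq_le:
  fixes s t r :: real
  assumes st: "0 \<le> s" "s \<le> 1" "0 \<le> t" "t \<le> 1"
    and r: "max 0 (s + t - 1) \<le> r" "r \<le> min s t"
  shows "(r - s * t)\<^sup>2 \<le> (s - s * s) * (t - t * t)"
proof -
  let ?G = "(s - s * s) * (t - t * t)"
  have upper: "(min s t - s * t)\<^sup>2 \<le> ?G"
  proof (cases "s \<le> t")
    case True
    have "?G - (s - s * t)\<^sup>2 = s * (1 - t) * (t - s)" by (simp add: algebra_simps power2_eq_square)
    moreover have "0 \<le> s * (1 - t) * (t - s)" using True st by simp
    ultimately show ?thesis using True by simp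
  next
    case False
    have "?G - (t - s * t)\<^sup>2 = t * (1 - s) * (s - t)" by (simp add: algebra_simps power2_eq_square)
    moreover have "0 \<le> t * (1 - s) * (s - t)" using False st by simp
    ultimately show ?thesis using False by simp
  qed
  have lower: "(s * t - max 0 (s + t - 1))\<^sup>2 \<le> ?G"
  proof (cases "s + t \<le> 1")
    case True
    have "?G - (s * t)\<^sup>2 = s * t * (1 - s - t)" by (simp add: algebra_simps power2_eq_square)
    moreover have "0 \<le> s * t * (1 - s - t)" using True st by simp
    ultimately show ?thesis using True by simp
  next
    case False
    have "?G - (s * t - (s + t - 1))\<^sup>2 = (1 - s) * (1 - t) * (s + t - 1)"
      by (simp add: algebra_simps power2_eq_square)
    moreover have "0 \<le> (1 - s) * (1 - t) * (s + t - 1)" using False st by simp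
    ultimately show ?thesis using False by simp
  qed
  show ?thesis
  proof (cases "s * t \<le> r")
    case True
    then have "(r - s * t)\<^sup>2 \<le> (min s t - s * t)\<^sup>2" using r by (intro power_mono) auto
    then show ?thesis using upper by linarith
  next
    case False
    then have "(r - s * t)\<^sup>2 = (s * t - r)\<^sup>2" by (simp add: power2_commute)
    also have "\<dots> \<le> (s * t - max 0 (s + t - 1))\<^sup>2" using False r by (intro power_mono) auto
    finally show ?thesis using lower by linarith
  qed
qed

lemma psd2_quadratic_form_nonneg:
  fixes X Y T v1 v2 :: real
  assumes "0 \<le> X" "0 \<le> Y" "T\<^sup>2 \<le> X * Y"
  shows "0 \<le> v1 * X * v1 + v1 * T * v2 + v2 * T * v1 + v2 * Y * v2"
proof (cases "X = 0")
  case True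
  then have "T = 0" using assms by simp
  moreover have "0 \<le> Y * v2\<^sup>2" using assms by simp
  ultimately show ?thesis using True by (simp add: power2_eq_square mult_ac)
next
  case False
  have "X * (v1 * X * v1 + v1 * T * v2 + v2 * T * v1 + v2 * Y * v2) = (X * v1 + T * v2)\<^sup>2 + (X * Y - T\<^sup>2) * v2\<^sup>2"
    by (simp add: algebra_simps power2_eq_square)
  also have "\<dots> \<ge> 0" using assms by simp
  finally show ?thesis using False assms by (simp add: zero_le_mult_iff)
qed

definition quadratic_form :: "nat \<Rightarrow> (nat \<Rightarrow> nat \<Rightarrow> real) \<Rightarrow> (nat \<Rightarrow> real) \<Rightarrow> real" where
  "quadratic_form N M v = (\<Sum>i=0..N. \<Sum>k=0..N. v i * M i k * v k)"

lemma sym_psd_iff: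
  "sym_psd N M \<longleftrightarrow> (\<forall>i\<in>{0..N}. \<forall>k\<in>{0..N}. M i k = M k i) \<and> (\<forall>v. 0 \<le> quadratic_form N M v)"
  by (simp add: sym_psd_def quadratic_form_def)

lemma quadratic_form_add:
  "quadratic_form N (\<lambda>i k. A i k + B i k) v = quadratic_form N A v + quadratic_form N B v"
  by (simp add: quadratic_form_def algebra_simps sum.distrib)

lemma sym_psd_add: "sym_psd N A \<Longrightarrow> sym_psd N B \<Longrightarrow> sym_psd N (\<lambda>i k. A i k + B i k)"
  by (simp add: sym_psd_iff quadratic_form_add)

lemma sym_psd_sum:
  assumes "finite J" "\<And>j. j \<in> J \<Longrightarrow> sym_psd N (B j)"
  shows "sym_psd N (\<lambda>i k. \<Sum>j\<in>J. B j i k)"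
  using assms
proof (induction J rule: finite_induct)
  case empty
  then show ?case by (simp add: sym_psd_iff quadratic_form_def)
next
  case (insert j J)
  then show ?case by (simp add: sym_psd_add)
qed

lemma sym_psd_outer: "sym_psd N (\<lambda>i k. c i * c k)"
proof -
  have "quadratic_form N (\<lambda>i k. c i * c k) v = (\<Sum>i=0..N. v i * c i)\<^sup>2" for v
    by (simp add: quadratic_form_def power2_eq_square sum_product mult_ac)
  then show ?thesis by (simp add: sym_psd_iff mult.commute)
qed

definition matrix_entry :: "nat \<Rightarrow> nat \<Rightarrow> real \<Rightarrow> nat \<Rightarrow> nat \<Rightarrow> real" where
  "matrix_entry p q c i k = (if i = p then if k = q then c else 0 else 0)"

lemma quadratic_form_matrix_entry:
  assumes "p \<le> N" "q \<le> N"
  shows "quadratic_form N (matrix_entry p q c) v = v p * c * v q"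
proof -
  have "v i * matrix_entry p q c i k * v k = (if k = q then if i = p then v p * c * v q else 0 else 0)" for i k
    by (simp add: matrix_entry_def)
  then show ?thesis using assms by (simp add: quadratic_form_def)
qed

definition sym_block2 :: "nat \<Rightarrow> nat \<Rightarrow> real \<Rightarrow> real \<Rightarrow> real \<Rightarrow> nat \<Rightarrow> nat \<Rightarrow> real" where
  "sym_block2 p q X T Y =
     (\<lambda>i k. matrix_entry p p X i k + matrix_entry p q T i k + matrix_entry q p T i k + matrix_entry q q Y i k)"

lemma sym_psd_sym_block2:
  assumes "p \<le> N" "q \<le> N" "0 \<le> X" "0 \<le> Y" "T\<^sup>2 \<le> X * Y"
  shows "sym_psd N (sym_block2 p q X T Y)"
proof -
  have "quadratic_form N (sym_block2 p q X T Y) v = v p * X * v p + v p * T * v q + v q * T * v p + v q * Y * v q" for v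
    using assms(1,2) by (simp add: sym_block2_def quadratic_form_add quadratic_form_matrix_entry)
  moreover have "sym_block2 p q X T Y i k = sym_block2 p q X T Y k i" for i k
    by (simp add: sym_block2_def matrix_entry_def)
  ultimately show ?thesis
    unfolding sym_psd_iff using psd2_quadratic_form_nonneg[OF assms(3-5)] by metis
qed

definition mccormick_gap_block :: "nat \<Rightarrow> (nat \<Rightarrow> real) \<Rightarrow> (nat \<Rightarrow> nat \<Rightarrow> real) \<Rightarrow> nat \<Rightarrow> nat \<Rightarrow> nat \<Rightarrow> real" where
  "mccormick_gap_block n u w j =
     sym_block2 j (n + j) (u j - u j * u j) (w j (n + j) - u j * u (n + j)) (u (n + j) - u (n + j) * u (n + j))"

definition psd_lift :: "nat \<Rightarrow> (nat \<Rightarrow> real) \<Rightarrow> (nat \<Rightarrow> nat \<Rightarrow> real) \<Rightarrow> nat \<Rightarrow> nat \<Rightarrow> real" where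
  "psd_lift n u w i k = u i * u k + (\<Sum>j=1..n. mccormick_gap_block n u w j i k)"

lemma psd_lift_entry:
  assumes "j \<in> {1..n}" "i = j \<or> i = n + j"
  shows "psd_lift n u w i k = u i * u k + mccormick_gap_block n u w j i k"
proof -
  have "mccormick_gap_block n u w j' i k = 0" if "j' \<in> {1..n} - {j}" for j'
    using assms that by (auto simp: mccormick_gap_block_def sym_block2_def matrix_entry_def)
  then have "(\<Sum>j'\<in>{1..n} - {j}. mccormick_gap_block n u w j' i k) = 0" by simp
  then show ?thesis
    using assms(1) by (simp add: psd_lift_def sum.remove)
qed

lemma objective_psd_lift:
  "objective n a cx cy j x y (psd_lift n u w) = objective n a cx cy j x y w"
proof -
  have "psd_lift n u w i (n + i) = w i (n + i)" if "i \<in> {1..n}" for i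
    using that by (simp add: psd_lift_entry mccormick_gap_block_def sym_block2_def matrix_entry_def)
  then show ?thesis by (simp add: objective_def)
qed

lemma psd_lift_mccormick_bounds:
  assumes F: "mccormick_feasible n m a cx cy b x y u w"
    and i: "i \<in> {1..2*n}" and k: "k \<in> {1..2*n}"
  shows "max 0 (u i + u k - 1) \<le> psd_lift n u w i k \<and> psd_lift n u w i k \<le> min (u i) (u k)"
proof -
  have u: "0 \<le> u l \<and> u l \<le> 1" if "l \<in> {1..2*n}" for l
    using F that by (auto simp: mccormick_feasible_def)
  obtain j where j: "j \<in> {1..n}" and ij: "i = j \<or> i = n + j"
  proof (cases "i \<le> n")
    case True
    then show ?thesis using i by (intro that[of i]) auto
  next
    case False
    then show ?thesis using i by (intro that[of "i - n"]) auto
  qed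
  have entry: "psd_lift n u w i k = u i * u k + mccormick_gap_block n u w j i k"
    by (rule psd_lift_entry[OF j ij])
  consider "k = i" | "i = j \<and> k = n + j \<or> i = n + j \<and> k = j" | "k \<noteq> j \<and> k \<noteq> n + j"
    using ij by blast
  then show ?thesis
  proof cases
    case 1
    then have "psd_lift n u w i k = u i"
      using entry ij j by (auto simp: mccormick_gap_block_def sym_block2_def matrix_entry_def)
    then show ?thesis using 1 u[OF i] by simp
  next
    case 2
    then have "psd_lift n u w i k = w j (n + j)"
      using entry j by (auto simp: mccormick_gap_block_def sym_block2_def matrix_entry_def)
    moreover have "max 0 (u j + u (n + j) - 1) \<le> w j (n + j) \<and> w j (n + j) \<le> min (u j) (u (n + j))"
      using F j by (auto simp: mccormick_feasible_def)
    ultimately show ?thesis using 2 by (auto simp: ac_simps)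
  next
    case 3
    then have "psd_lift n u w i k = u i * u k"
      using entry ij by (auto simp: mccormick_gap_block_def sym_block2_def matrix_entry_def)
    then show ?thesis using u[OF i] u[OF k] mccormick_product_bounds[of "u i" "u k"] by simp
  qed
qed

lemma sym_psd_psd_lift:
  assumes F: "mccormick_feasible n m a cx cy b x y u w"
  shows "sym_psd (2*n) (Wmat u (psd_lift n u w))"
proof -
  define c where "c i = (if i = 0 then 1 else u i)" for i
  have gap_border: "mccormick_gap_block n u w j i k = 0" if "j \<in> {1..n}" "i = 0 \<or> k = 0" for j i k
    using that by (auto simp: mccormick_gap_block_def sym_block2_def matrix_entry_def)
  have W: "Wmat u (psd_lift n u w) = (\<lambda>i k. c i * c k + (\<Sum>j=1..n. mccormick_gap_block n u w j i k))"
    by (auto simp: fun_eq_iff Wmat_def psd_lift_def c_def gap_border)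
  have "sym_psd (2*n) (mccormick_gap_block n u w j)" if j: "j \<in> {1..n}" for j
  proof -
    have "0 \<le> u l \<and> u l \<le> 1" if "l \<in> {j, n + j}" for l
      using F j that by (auto simp: mccormick_feasible_def)
    moreover have "max 0 (u j + u (n + j) - 1) \<le> w j (n + j) \<and> w j (n + j) \<le> min (u j) (u (n + j))"
      using F j by (auto simp: mccormick_feasible_def)
    ultimately show ?thesis
      unfolding mccormick_gap_block_def using j
      by (intro sym_psd_sym_block2 mccormick_gap_sq_le) (auto simp: mult_left_le)
  qed
  then show ?thesis
    unfolding W by (intro sym_psd_add sym_psd_outer sym_psd_sum) auto
qed

lemma mcsdp_feasible_psd_lift:
  assumes "mccormick_feasible n m a cx cy b x y u w"
  shows "mcsdp_feasible n m a cx cy b x y u (psd_lift n u w)"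
  using assms psd_lift_mccormick_bounds[OF assms] sym_psd_psd_lift[OF assms]
  by (auto simp: mcsdp_feasible_def mccormick_feasible_def objective_psd_lift)

lemma is_min_value_compact_reduction:
  fixes f :: "'a::topological_space \<Rightarrow> real"
  assumes K: "compact K" and closed: "closed {p. P p}" and f: "continuous_on K f"
    and feasible: "\<exists>p. P p" and reduce: "\<And>p. P p \<Longrightarrow> \<exists>q\<in>K. P q \<and> f q = f p"
  shows "\<exists>z. is_min_value P f z"
proof -
  let ?S = "K \<inter> {p. P p}"
  have "compact ?S" using K closed by (rule compact_Int_closed)
  moreover have "?S \<noteq> {}" using feasible reduce by blast
  moreover have "continuous_on ?S f" using f by (rule continuous_on_subset) blast
  ultimately obtain q where q: "q \<in> ?S" and min: "\<And>p. p \<in> ?S \<Longrightarrow> f q \<le> f p"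
    using continuous_attains_inf by meson
  have "f q \<le> f p" if "P p" for p
    using reduce[OF that] min by fastforce
  then show ?thesis using q unfolding is_min_value_def by blast
qed

lemma is_min_value_value_preserving_lift:
  assumes "is_min_value P f z" and "\<And>q. Q q \<Longrightarrow> P q" and "\<And>p. P p \<Longrightarrow> \<exists>q. Q q \<and> f q = f p"
  shows "is_min_value Q f z"
  using assms unfolding is_min_value_def by metis

lemma compact_PiE_UNIV_const: "compact S \<Longrightarrow> compact (UNIV \<rightarrow>\<^sub>E (S :: 'b::topological_space set))"
  using compactin_PiE[of "\<lambda>_. euclidean" UNIV "\<lambda>_. S"] by (simp add: euclidean_product_topology)

definition unit_cube :: "((nat \<Rightarrow> real) \<times> (nat \<Rightarrow> real) \<times> (nat \<Rightarrow> real) \<times> (nat \<Rightarrow> nat \<Rightarrow> real)) set" where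
  "unit_cube = (UNIV \<rightarrow>\<^sub>E {0..1}) \<times> (UNIV \<rightarrow>\<^sub>E {0..1}) \<times> (UNIV \<rightarrow>\<^sub>E {0..1}) \<times> (UNIV \<rightarrow>\<^sub>E UNIV \<rightarrow>\<^sub>E {0..1})"

lemma compact_unit_cube: "compact unit_cube"
  unfolding unit_cube_def by (intro compact_Times compact_PiE_UNIV_const) auto

lemma continuous_on_fst_apply [continuous_intros]:
  "continuous_on S f \<Longrightarrow> continuous_on S (\<lambda>x. fst (f x) i)"
  by (rule continuous_on_product_then_coordinatewise[OF continuous_on_fst])

lemma continuous_on_snd_apply [continuous_intros]:
  "continuous_on S f \<Longrightarrow> continuous_on S (\<lambda>x. snd (f x) i)"
  by (rule continuous_on_product_then_coordinatewise[OF continuous_on_snd])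

lemma continuous_on_snd_apply2 [continuous_intros]:
  "continuous_on S f \<Longrightarrow> continuous_on S (\<lambda>x. snd (f x) i k)"
  by (rule continuous_on_product_then_coordinatewise[OF continuous_on_snd_apply])

lemma continuous_on_objective:
  "continuous_on S (\<lambda>(x, y, u, w). objective n a cx cy j x y w)"
  unfolding objective_def split_beta
  by (intro continuous_intros)

lemma closed_mccormick_feasible:
  "closed {(x, y, u, w). mccormick_feasible n m a cx cy b x y u w}"
  unfolding mccormick_feasible_def objective_def split_beta Ball_def
  by (intro closed_Collect_conj closed_Collect_all closed_Collect_imp open_Collect_const
      closed_Collect_le closed_Collect_eq continuous_intros)

lemma mccormick_feasible_truncation:
  assumes F: "mccormick_feasible n m a cx cy b x y u w"
  obtains x' y' u' w' where "(x', y', u', w') \<in> unit_cube"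
    and "mccormick_feasible n m a cx cy b x' y' u' w'"
    and "\<And>j. objective n a cx cy j x' y' w' = objective n a cx cy j x y w"
proof -
  define x' where "x' i = (if i \<in> {1..n} then x i else 0)" for i
  define y' where "y' i = (if i \<in> {1..n} then y i else 0)" for i
  define u' where "u' i = (if i \<in> {1..2*n} then u i else 0)" for i
  define w' where "w' i k = (if i \<in> {1..2*n} \<and> k \<in> {1..2*n} then w i k else 0)" for i k
  have obj: "objective n a cx cy j x' y' w' = objective n a cx cy j x y w" for j
    unfolding objective_def x'_def y'_def w'_def by (intro arg_cong2[where f = "(+)"] sum.cong) auto
  have C1: "\<forall>j\<in>{1..m}. b j \<le> objective n a cx cy j x y w"
    and C2: "\<forall>i\<in>{1..n}. x i = u i \<and> y i = u (n + i)"
    and C3: "\<forall>i\<in>{1..2*n}. 0 \<le> u i \<and> u i \<le> 1"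
    and C4: "\<forall>i\<in>{1..2*n}. \<forall>k\<in>{1..2*n}. max 0 (u i + u k - 1) \<le> w i k \<and> w i k \<le> min (u i) (u k)"
    using F unfolding mccormick_feasible_def by blast+
  have "mccormick_feasible n m a cx cy b x' y' u' w'"
    unfolding mccormick_feasible_def obj
    using C1 C2 C3 C4 by (simp add: x'_def y'_def u'_def w'_def)
  moreover have "(x', y', u', w') \<in> unit_cube"
  proof -
    have "0 \<le> w i k \<and> w i k \<le> 1" if "i \<in> {1..2*n}" "k \<in> {1..2*n}" for i k
      using C3 C4 that by fastforce
    moreover have "0 \<le> x i \<and> x i \<le> 1 \<and> 0 \<le> y i \<and> y i \<le> 1" if "i \<in> {1..n}" for i
      using C2 C3 that by force
    ultimately show ?thesis
      using C3 by (simp add: unit_cube_def PiE_iff x'_def y'_def u'_def w'_def)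
  qed
  ultimately show ?thesis using obj that by blast
qed

lemma mccormick_min_value_exists:
  assumes "mccormick_feasible n m a cx cy b x y u w"
  shows "\<exists>z. is_min_value (\<lambda>(x, y, u, w). mccormick_feasible n m a cx cy b x y u w)
                          (\<lambda>(x, y, u, w). objective n a cx cy j x y w) z"
proof (rule is_min_value_compact_reduction[OF compact_unit_cube])
  show "closed {p. case p of (x, y, u, w) \<Rightarrow> mccormick_feasible n m a cx cy b x y u w}"
    by (rule closed_mccormick_feasible)
  show "continuous_on unit_cube (\<lambda>(x, y, u, w). objective n a cx cy j x y w)"
    by (rule continuous_on_objective)
  show "\<exists>p. case p of (x, y, u, w) \<Rightarrow> mccormick_feasible n m a cx cy b x y u w"
    using assms by blast
  fix p
  assume "case p of (x, y, u, w) \<Rightarrow> mccormick_feasible n m a cx cy b x y u w"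
  then obtain x y u w where p: "p = (x, y, u, w)" and F: "mccormick_feasible n m a cx cy b x y u w"
    by (cases p) auto
  obtain x' y' u' w' where "(x', y', u', w') \<in> unit_cube"
    and "mccormick_feasible n m a cx cy b x' y' u' w'"
    and "objective n a cx cy j x' y' w' = objective n a cx cy j x y w"
    using mccormick_feasible_truncation[OF F] by metis
  then show "\<exists>q\<in>unit_cube. (case q of (x, y, u, w) \<Rightarrow> mccormick_feasible n m a cx cy b x y u w) \<and>
      (case q of (x, y, u, w) \<Rightarrow> objective n a cx cy j x y w) = (case p of (x, y, u, w) \<Rightarrow> objective n a cx cy j x y w)"
    using p by (intro bexI[of _ "(x', y', u', w')"]) auto
qed

lemma mcsdp_is_min_value:
  assumes "is_min_value (\<lambda>(x, y, u, w). mccormick_feasible n m a cx cy b x y u w)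
                        (\<lambda>(x, y, u, w). objective n a cx cy j x y w) z"
  shows "is_min_value (\<lambda>(x, y, u, w). mcsdp_feasible n m a cx cy b x y u w)
                      (\<lambda>(x, y, u, w). objective n a cx cy j x y w) z"
proof (rule is_min_value_value_preserving_lift[OF assms])
  show "case q of (x, y, u, w) \<Rightarrow> mccormick_feasible n m a cx cy b x y u w"
    if "case q of (x, y, u, w) \<Rightarrow> mcsdp_feasible n m a cx cy b x y u w" for q
    using that by (auto simp: mcsdp_feasible_def)
  fix p
  assume "case p of (x, y, u, w) \<Rightarrow> mccormick_feasible n m a cx cy b x y u w"
  then obtain x y u w where p: "p = (x, y, u, w)" and "mccormick_feasible n m a cx cy b x y u w"
    by (cases p) auto
  then show "\<exists>q. (case q of (x, y, u, w) \<Rightarrow> mcsdp_feasible n m a cx cy b x y u w) \<and>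
      (case q of (x, y, u, w) \<Rightarrow> objective n a cx cy j x y w) = (case p of (x, y, u, w) \<Rightarrow> objective n a cx cy j x y w)"
    by (intro exI[of _ "(x, y, u, psd_lift n u w)"]) (simp add: mcsdp_feasible_psd_lift objective_psd_lift)
qed

theorem mainTheorem1:
  fixes n m :: nat
    and a cx cy :: "nat \<Rightarrow> nat \<Rightarrow> real"
    and b :: "nat \<Rightarrow> real"
  assumes "n \<ge> 1" and "m \<ge> 1"
  defines "FMc \<equiv> \<lambda>(x, y, u, w). mccormick_feasible n m a cx cy b x y u w"
    and "FMS \<equiv> \<lambda>(x, y, u, w). mcsdp_feasible n m a cx cy b x y u w"
    and "obj \<equiv> \<lambda>(x, y, u, w). objective n a cx cy 0 x y w"
  shows "((\<nexists>p. FMc p) \<and> (\<nexists>p. FMS p)) \<or>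
         ((\<exists>p. FMc p) \<and> (\<exists>p. FMS p) \<and>
          (\<exists>z. is_min_value FMc obj z \<and> is_min_value FMS obj z))"
proof (cases "\<exists>p. FMc p")
  case False
  moreover have "FMc p" if "FMS p" for p
    using that by (auto simp: FMc_def FMS_def mcsdp_feasible_def)
  ultimately show ?thesis by blast
next
  case True
  then obtain x y u w where "mccormick_feasible n m a cx cy b x y u w"
    by (auto simp: FMc_def)
  then obtain z where Mc: "is_min_value FMc obj z"
    unfolding FMc_def obj_def using mccormick_min_value_exists by blast
  then have MS: "is_min_value FMS obj z"
    unfolding FMc_def FMS_def obj_def by (rule mcsdp_is_min_value)
  then have "\<exists>p. FMS p" by (auto simp: is_min_value_def)
  then show ?thesis using True Mc MS by blast
qed

end
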